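(* Let $\mathbf{c}=\{c_n\}_{n=-\infty}^{\infty}$ be a complex sequence such that, for some $\theta_0\in[0,\pi/2)$, $c_n\pm c_{-n}\in K(\theta_0)$ for $n=1,2,\dots$, and suppose there exist a natural number $N_0$ and a constant $M(\mathbf c)>0$ with $$\sum_{n=m}^{2m}|c_n-c_{n+1}|\le M(\mathbf c)\max_{m\le n<m+N_0}|c_n|\qquad\text{for all } m=1,2,\dots.$$ Let $S_n(f,x)=\sum_{k=-n}^{n}c_ke^{ikx}$ and $f(x)=\lim_{n\to\infty}S_n(f,x)$ wherever this limit exists. If $\lim_{n\to\infty}\|f-S_n(f)\|=0$, then $\lim_{n\to\infty}nc_n=0$.
   Context: For $\theta\in[0,\pi/2]$, $K(\theta)=\{z\in\mathbb C: |\arg z|\le\theta\}$. $\|g\|=\sup_{x\in\mathbb R}|g(x)|$ for $2\pi$-periodic $g$. *)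

theory Defs
  imports "HOL-Complex_Analysis.Complex_Analysis"
begin

definition sector :: "real \<Rightarrow> complex set" where
  "sector \<theta> = {z. z = 0 \<or> \<bar>Arg z\<bar> \<le> \<theta>}"

definition partial_sum :: "(int \<Rightarrow> complex) \<Rightarrow> nat \<Rightarrow> real \<Rightarrow> complex" where
  "partial_sum c n x = (\<Sum>k\<in>{-int n..int n}. c k * exp (\<i> * of_int k * of_real x))"

end

theory Submission
  imports Defs
begin

text \<open>Uniform convergence makes the differences S_Q - S_P uniformly small. At x = 0 such a
difference is \<Sum>_{P<k\<le>Q} (c_k + c_{-k}), and its value at x = pi/(2Q) minus that at -x is
2i \<Sum>_{P<k\<le>Q} sin(kx) (c_k - c_{-k}), where sin(kx) \<ge> 1/2 as long as Q \<le> 3(P+1).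
Vectors in K(\<theta>) do not cancel (Re z \<ge> |z| cos \<theta>), so \<Sum>_{P<k\<le>Q} |c_k| is small on
all such windows. The quasi-monotonicity condition shows that |c_m| is controlled by the maximum
of |c| on each block of N0 consecutive indices in [m/2, m]; as there are about m/(2 N0) such
blocks, m |c_m| is bounded by a multiple of \<Sum>_{m/2<k\<le>m} |c_k|, which tends to 0.\<close>

lemma sector_cos_mult_norm_le_Re:
  assumes "z \<in> sector t" "0 \<le> t" "t < pi / 2"
  shows "cos t * cmod z \<le> Re z"
proof (cases "z = 0")
  case False
  with assms have "\<bar>Arg z\<bar> \<le> t" by (auto simp: sector_def)
  with assms have "cos t \<le> cos \<bar>Arg z\<bar>"
    by (intro cos_monotone_0_pi_le) auto
  also have "cos \<bar>Arg z\<bar> = cos (Arg z)"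
    by (simp add: abs_if)
  finally have "cos t * cmod z \<le> cmod z * cos (Arg z)"
    by (simp add: mult.commute mult_left_mono)
  also have "\<dots> = Re z"
    by (metis Re_rcis rcis_cmod_Arg)
  finally show ?thesis .
qed simp

lemma sector_weighted_sum_norm_le:
  assumes "\<And>k. k \<in> A \<Longrightarrow> z k \<in> sector t" "\<And>k. k \<in> A \<Longrightarrow> w k \<ge> 0"
    and "0 \<le> t" "t < pi / 2"
  shows "cos t * (\<Sum>k\<in>A. w k * cmod (z k)) \<le> cmod (\<Sum>k\<in>A. of_real (w k) * z k)"
proof -
  have "cos t * (\<Sum>k\<in>A. w k * cmod (z k)) = (\<Sum>k\<in>A. w k * (cos t * cmod (z k)))"
    by (simp add: sum_distrib_left algebra_simps)
  also have "\<dots> \<le> (\<Sum>k\<in>A. w k * Re (z k))"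
    using assms sector_cos_mult_norm_le_Re by (intro sum_mono mult_left_mono) auto
  also have "\<dots> = Re (\<Sum>k\<in>A. of_real (w k) * z k)"
    by simp
  also have "\<dots> \<le> cmod (\<Sum>k\<in>A. of_real (w k) * z k)"
    by (rule complex_Re_le_cmod)
  finally show ?thesis .
qed

lemma partial_sum_diff:
  assumes "P \<le> Q"
  shows "partial_sum c Q x - partial_sum c P x =
    (\<Sum>k\<in>{int P<..int Q}. c k * exp (\<i> * of_int k * of_real x)
                          + c (-k) * exp (\<i> * of_int (-k) * of_real x))"
  using assms
proof (induction Q)
  case (Suc Q)
  show ?case
  proof (cases "P = Suc Q")
    case False
    with Suc.prems have "P \<le> Q" by simp
    have "{-int (Suc Q)..int (Suc Q)} = insert (int Q + 1) (insert (-(int Q + 1)) {-int Q..int Q})"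
      and "{int P<..int (Suc Q)} = insert (int Q + 1) {int P<..int Q}"
      using \<open>P \<le> Q\<close> by auto
    then show ?thesis
      using Suc.IH[OF \<open>P \<le> Q\<close>] by (simp add: partial_sum_def algebra_simps)
  qed simp
qed simp

lemma exp_diff_exp_neg_eq_sin:
  "exp (\<i> * of_int k * of_real x) - exp (\<i> * of_int (-k) * of_real x) = 2 * \<i> * of_real (sin (k * x))"
proof -
  have "exp (\<i> * of_int k * of_real x) = cis (k * x)"
    and "exp (\<i> * of_int (-k) * of_real x) = cis (- (k * x))"
    by (simp_all add: cis_conv_exp mult.commute mult.left_commute)
  then show ?thesis by (simp add: complex_eq_iff)
qed

lemma sin_pi_mult_ge_one_half:
  assumes "1 / 6 \<le> a" "a \<le> 1 / 2"
  shows "1 / 2 \<le> sin (pi * a)"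
proof -
  have "pi / 6 \<le> pi * a" "pi * a \<le> pi / 2"
    using mult_left_mono[OF assms(1), of pi] mult_left_mono[OF assms(2), of pi] by simp_all
  then have "sin (pi / 6) \<le> sin (pi * a)"
    by (intro sin_monotone_2pi_le) auto
  then show ?thesis by (simp add: sin_30)
qed

lemma sector_even_part_window_bound:
  assumes "\<And>k. k \<ge> 1 \<Longrightarrow> c k + c (-k) \<in> sector t" and "0 \<le> t" "t < pi / 2"
    and small: "\<And>x. cmod (partial_sum c Q x - partial_sum c P x) \<le> e" and "P \<le> Q"
  shows "cos t * (\<Sum>k\<in>{int P<..int Q}. cmod (c k + c (-k))) \<le> e"
proof -
  have "cos t * (\<Sum>k\<in>{int P<..int Q}. 1 * cmod (c k + c (-k)))
      \<le> cmod (\<Sum>k\<in>{int P<..int Q}. of_real 1 * (c k + c (-k)))"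
    using assms by (intro sector_weighted_sum_norm_le) auto
  also have "(\<Sum>k\<in>{int P<..int Q}. of_real 1 * (c k + c (-k))) = partial_sum c Q 0 - partial_sum c P 0"
    using \<open>P \<le> Q\<close> by (simp add: partial_sum_diff)
  finally show ?thesis
    using small[of 0] by simp
qed

lemma sector_odd_part_window_bound:
  assumes "\<And>k. k \<ge> 1 \<Longrightarrow> c k - c (-k) \<in> sector t" and t: "0 \<le> t" "t < pi / 2"
    and small: "\<And>x. cmod (partial_sum c Q x - partial_sum c P x) \<le> e"
    and PQ: "P < Q" "Q \<le> 3 * (P + 1)"
  shows "cos t * (\<Sum>k\<in>{int P<..int Q}. cmod (c k - c (-k))) \<le> 2 * e"
proof -
  define A where "A = {int P<..int Q}"
  define x where "x = pi / (2 * Q)"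
  define s where "s k = sin (k * x)" for k :: int
  have s: "1 / 2 \<le> s k" if "k \<in> A" for k
  proof -
    have "1 / 2 \<le> sin (pi * (of_int k / (2 * Q)))"
      by (rule sin_pi_mult_ge_one_half) (use that PQ in \<open>auto simp: A_def field_simps\<close>)
    also have "\<dots> = s k"
      by (simp add: s_def x_def mult.commute)
    finally show ?thesis .
  qed
  have sector_bound: "cos t * (\<Sum>k\<in>A. s k * cmod (c k - c (-k)))
      \<le> cmod (\<Sum>k\<in>A. of_real (s k) * (c k - c (-k)))"
    using assms s unfolding A_def
    by (intro sector_weighted_sum_norm_le) (auto intro: order_trans[of 0 "1/2"])
  have "(partial_sum c Q x - partial_sum c P x) - (partial_sum c Q (-x) - partial_sum c P (-x))
      = (\<Sum>k\<in>A. (c k - c (-k)) * (exp (\<i> * of_int k * of_real x) - exp (\<i> * of_int (-k) * of_real x)))"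
    using PQ unfolding A_def
    by (simp add: partial_sum_diff flip: sum_subtractf) (auto intro: sum.cong simp: algebra_simps)
  also have "\<dots> = 2 * \<i> * (\<Sum>k\<in>A. of_real (s k) * (c k - c (-k)))"
    unfolding exp_diff_exp_neg_eq_sin s_def sum_distrib_left by (simp add: algebra_simps)
  finally have "cmod (2 * \<i> * (\<Sum>k\<in>A. of_real (s k) * (c k - c (-k)))) \<le> 2 * e"
    using small[of x] small[of "-x"] norm_triangle_ineq4 by (smt (verit))
  with sector_bound have weighted: "cos t * (\<Sum>k\<in>A. s k * cmod (c k - c (-k))) \<le> e"
    by (simp add: norm_mult)
  have "cmod (c k - c (-k)) \<le> 2 * (s k * cmod (c k - c (-k)))" if "k \<in> A" for k
    using mult_right_mono[OF s[OF that], of "cmod (c k - c (-k))"] by simp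
  then have "(\<Sum>k\<in>A. cmod (c k - c (-k))) \<le> 2 * (\<Sum>k\<in>A. s k * cmod (c k - c (-k)))"
    by (simp add: sum_distrib_left sum_mono)
  moreover have "0 \<le> cos t"
    using t by (intro cos_ge_zero) auto
  ultimately have "cos t * (\<Sum>k\<in>A. cmod (c k - c (-k)))
      \<le> cos t * (2 * (\<Sum>k\<in>A. s k * cmod (c k - c (-k))))"
    by (rule mult_left_mono)
  with weighted show ?thesis
    unfolding A_def by simp
qed

lemma sector_window_bound:
  assumes "\<And>k. k \<ge> 1 \<Longrightarrow> c k + c (-k) \<in> sector t \<and> c k - c (-k) \<in> sector t"
    and t: "0 \<le> t" "t < pi / 2"
    and "\<And>x. cmod (partial_sum c Q x - partial_sum c P x) \<le> e"
    and "P < Q" "Q \<le> 3 * (P + 1)"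
  shows "cos t * (\<Sum>k\<in>{int P<..int Q}. cmod (c k)) \<le> 3 / 2 * e"
proof -
  have "2 * (\<Sum>k\<in>{int P<..int Q}. cmod (c k))
      \<le> (\<Sum>k\<in>{int P<..int Q}. cmod (c k + c (-k))) + (\<Sum>k\<in>{int P<..int Q}. cmod (c k - c (-k)))"
    unfolding sum_distrib_left sum.distrib[symmetric]
    by (intro sum_mono) (use norm_triangle_ineq[of "c k + c (-k)" "c k - c (-k)" for k] in simp)
  moreover have "0 \<le> cos t"
    using t by (intro cos_ge_zero) auto
  ultimately have "cos t * (2 * (\<Sum>k\<in>{int P<..int Q}. cmod (c k)))
      \<le> cos t * ((\<Sum>k\<in>{int P<..int Q}. cmod (c k + c (-k))) + (\<Sum>k\<in>{int P<..int Q}. cmod (c k - c (-k))))"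
    by (rule mult_left_mono)
  moreover have "cos t * (\<Sum>k\<in>{int P<..int Q}. cmod (c k + c (-k))) \<le> e"
    using assms by (intro sector_even_part_window_bound) auto
  moreover have "cos t * (\<Sum>k\<in>{int P<..int Q}. cmod (c k - c (-k))) \<le> 2 * e"
    using assms by (intro sector_odd_part_window_bound) auto
  ultimately show ?thesis
    by (simp add: distrib_left)
qed

lemma norm_diff_le_sum_norm_diffs:
  fixes c :: "int \<Rightarrow> 'a::real_normed_vector"
  shows "norm (c (m + int d) - c m) \<le> (\<Sum>n\<in>{m..<m + int d}. norm (c n - c (n + 1)))"
proof (induction d)
  case (Suc d)
  have "norm (c (m + int (Suc d)) - c m) \<le> norm (c (m + int d) - c (m + int d + 1)) + norm (c (m + int d) - c m)"
    using norm_triangle_ineq[of "c (m + int d + 1) - c (m + int d)" "c (m + int d) - c m"]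
    by (simp add: norm_minus_commute ac_simps)
  moreover have "{m..<m + int (Suc d)} = insert (m + int d) {m..<m + int d}"
    by auto
  ultimately show ?case
    using Suc.IH by simp
qed simp

lemma Max_le_sum:
  fixes g :: "'a \<Rightarrow> 'b::linordered_semidom"
  assumes "finite A" "A \<noteq> {}" "\<And>x. x \<in> A \<Longrightarrow> 0 \<le> g x"
  shows "Max (g ` A) \<le> sum g A"
proof -
  have "Max (g ` A) \<in> g ` A"
    using assms by (intro Max_in) auto
  then obtain j where "j \<in> A" "Max (g ` A) = g j"
    by blast
  then show ?thesis
    using assms member_le_sum[of j A g] by auto
qed

lemma sum_Max_blocks_le:
  fixes g :: "int \<Rightarrow> 'a::linordered_semidom"
  assumes "N \<ge> 1" "\<And>k. 0 \<le> g k"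
  shows "(\<Sum>i<q. Max (g ` {h + int i * int N..<h + int i * int N + int N}))
     \<le> (\<Sum>k\<in>{h..<h + int q * int N}. g k)"
proof (induction q)
  case (Suc q)
  let ?B = "{h + int q * int N..<h + int q * int N + int N}"
  have "{h..<h + int (Suc q) * int N} = {h..<h + int q * int N} \<union> ?B"
    using ivl_disj_un_two(3)[of h "h + int q * int N" "h + int q * int N + int N"]
    by (simp add: algebra_simps)
  then have "(\<Sum>k\<in>{h..<h + int (Suc q) * int N}. g k) = (\<Sum>k\<in>{h..<h + int q * int N}. g k) + sum g ?B"
    by (simp add: sum.union_disjoint)
  moreover have "Max (g ` ?B) \<le> sum g ?B"
    using assms by (intro Max_le_sum) auto
  ultimately show ?case
    using add_mono[OF Suc.IH] by simp
qed simp

lemma norm_le_block_Max: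
  fixes c :: "int \<Rightarrow> 'a::real_normed_vector"
  assumes "(\<Sum>n\<in>{j..2*j}. norm (c n - c (n + 1))) \<le> M * Max ((\<lambda>n. norm (c n)) ` {j..<j + int N})"
    and "N \<ge> 1" "j \<le> k" "k \<le> 2 * j + 1"
  shows "norm (c k) \<le> (M + 1) * Max ((\<lambda>n. norm (c n)) ` {j..<j + int N})"
proof -
  define \<mu> where "\<mu> = Max ((\<lambda>n. norm (c n)) ` {j..<j + int N})"
  have "norm (c j) \<le> \<mu>"
    unfolding \<mu>_def using assms by (intro Max_ge) auto
  have "norm (c (j + int (nat (k - j))) - c j) \<le> (\<Sum>n\<in>{j..<j + int (nat (k - j))}. norm (c n - c (n + 1)))"
    by (rule norm_diff_le_sum_norm_diffs)
  also have "\<dots> \<le> (\<Sum>n\<in>{j..2*j}. norm (c n - c (n + 1)))"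
    using assms by (intro sum_mono2) auto
  finally have "norm (c k - c j) \<le> M * \<mu>"
    using assms unfolding \<mu>_def by simp
  with \<open>norm (c j) \<le> \<mu>\<close> show ?thesis
    using norm_triangle_ineq2[of "c k" "c j"] unfolding \<mu>_def by (simp add: algebra_simps)
qed

lemma of_nat_mult_norm_le_block_sum:
  fixes c :: "int \<Rightarrow> 'a::real_normed_vector"
  assumes diff: "\<And>j. 1 \<le> j \<Longrightarrow>
      (\<Sum>n\<in>{j..2*j}. norm (c n - c (n + 1))) \<le> M * Max ((\<lambda>n. norm (c n)) ` {j..<j + int N})"
    and "N \<ge> 1" "0 \<le> M" "1 \<le> h" "h + int q * int N \<le> m" "m \<le> 2 * h + 1"
  shows "of_nat q * norm (c m) \<le> (M + 1) * (\<Sum>k\<in>{h..<h + int q * int N}. norm (c k))"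
proof -
  let ?block = "\<lambda>i. {h + int i * int N..<h + int i * int N + int N}"
  have "of_nat q * norm (c m) = (\<Sum>i<q. norm (c m))"
    by simp
  also have "\<dots> \<le> (\<Sum>i<q. (M + 1) * Max ((\<lambda>n. norm (c n)) ` ?block i))"
  proof (intro sum_mono norm_le_block_Max diff)
    fix i assume "i \<in> {..<q}"
    then have "int i * int N + int N \<le> int q * int N"
      using mult_le_mono1[of "Suc i" q N] by (simp flip: of_nat_mult of_nat_add)
    moreover have "2 * h + 1 \<le> 2 * (h + int i * int N) + 1"
      by simp
    ultimately show "h + int i * int N \<le> m" and "m \<le> 2 * (h + int i * int N) + 1"
      using assms(5,6) by linarith+
  qed (use assms in \<open>auto intro: add_increasing2\<close>)
  also have "\<dots> = (M + 1) * (\<Sum>i<q. Max ((\<lambda>n. norm (c n)) ` ?block i))"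
    by (simp add: sum_distrib_left)
  also have "\<dots> \<le> (M + 1) * (\<Sum>k\<in>{h..<h + int q * int N}. norm (c k))"
    using assms by (intro mult_left_mono sum_Max_blocks_le) auto
  finally show ?thesis .
qed

lemma of_nat_mult_norm_le_window_bound:
  fixes c :: "int \<Rightarrow> 'a::real_normed_vector"
  assumes diff: "\<And>j. 1 \<le> j \<Longrightarrow>
      (\<Sum>n\<in>{j..2*j}. norm (c n - c (n + 1))) \<le> M * Max ((\<lambda>n. norm (c n)) ` {j..<j + int N})"
    and N: "N \<ge> 1" and M: "0 \<le> M"
    and window: "\<And>P Q. P0 \<le> P \<Longrightarrow> P < Q \<Longrightarrow> Q \<le> 3 * (P + 1) \<Longrightarrow>
      (\<Sum>k\<in>{int P<..int Q}. norm (c k)) \<le> B"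
    and m: "2 * P0 + 2 \<le> m"
  shows "real m * norm (c (int m)) \<le> 2 * real N * (M + 2) * B"
proof -
  define h where "h = m div 2"
  define q where "q = (m - h) div N"
  have h: "P0 + 1 \<le> h" "h < m" "m \<le> 2 * h + 1" "m \<le> 2 * (m - h)"
    using m by (auto simp: h_def)
  have "{int (m - 1)<..int m} = {int m}"
    using m by auto
  then have cm: "norm (c (int m)) \<le> B"
    using window[of "m - 1" m] m by simp
  have "q * N \<le> m - h" "h \<le> m"
    by (simp_all add: q_def h_def)
  then have "h + q * N \<le> m"
    by linarith
  then have "int h + int q * int N \<le> int m"
    by (simp flip: of_nat_mult of_nat_add)
  then have "of_nat q * norm (c (int m)) \<le> (M + 1) * (\<Sum>k\<in>{int h..<int h + int q * int N}. norm (c k))"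
    using h by (intro of_nat_mult_norm_le_block_sum[OF diff N M]) auto
  also have "\<dots> \<le> (M + 1) * (\<Sum>k\<in>{int (h - 1)<..int m}. norm (c k))"
    using \<open>int h + int q * int N \<le> int m\<close> h M by (intro mult_left_mono sum_mono2) auto
  also have "\<dots> \<le> (M + 1) * B"
    using h M by (intro mult_left_mono window) auto
  finally have q_bound: "of_nat q * norm (c (int m)) \<le> (M + 1) * B" .
  have "m - h = q * N + (m - h) mod N"
    by (simp add: q_def)
  also have "\<dots> < q * N + N"
    using N by simp
  finally have "m \<le> 2 * (N * (q + 1))"
    using h by (simp add: algebra_simps)
  then have "real m \<le> real (2 * (N * (q + 1)))"
    by (rule of_nat_mono)
  then have "real m \<le> 2 * real N * (real q + 1)"
    by (simp add: algebra_simps)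
  then have "real m * norm (c (int m)) \<le> 2 * real N * (real q + 1) * norm (c (int m))"
    by (rule mult_right_mono) simp
  also have "\<dots> = 2 * real N * (real q * norm (c (int m)) + norm (c (int m)))"
    by (simp add: algebra_simps)
  also have "\<dots> \<le> 2 * real N * ((M + 1) * B + B)"
    using q_bound cm by (intro mult_left_mono add_mono) auto
  also have "\<dots> = 2 * real N * (M + 2) * B"
    by (simp add: algebra_simps)
  finally show ?thesis .
qed

lemma uniform_limit_sector_window_bound:
  assumes sector: "\<And>k. k \<ge> 1 \<Longrightarrow> c k + c (-k) \<in> sector t \<and> c k - c (-k) \<in> sector t"
    and t: "0 \<le> t" "t < pi / 2"
    and lim: "uniform_limit UNIV (partial_sum c) f sequentially" and "B > 0"
  obtains P0 where "\<And>P Q. P0 \<le> P \<Longrightarrow> P < Q \<Longrightarrow> Q \<le> 3 * (P + 1) \<Longrightarrow>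
    (\<Sum>k\<in>{int P<..int Q}. cmod (c k)) \<le> B"
proof -
  have "cos t > 0"
    using t by (intro cos_gt_zero_pi) auto
  define e where "e = 2 / 3 * cos t * B"
  have "e > 0"
    using \<open>cos t > 0\<close> \<open>B > 0\<close> by (simp add: e_def)
  have "uniformly_Cauchy_on UNIV (partial_sum c)"
    using lim by (intro uniformly_convergent_Cauchy) (auto simp: uniformly_convergent_on_def)
  then obtain P0 where P0: "\<forall>x. \<forall>Q\<ge>P0. \<forall>P\<ge>P0. dist (partial_sum c Q x) (partial_sum c P x) < e"
    using \<open>e > 0\<close> unfolding uniformly_Cauchy_on_def by blast
  have "(\<Sum>k\<in>{int P<..int Q}. cmod (c k)) \<le> B"
    if "P0 \<le> P" "P < Q" "Q \<le> 3 * (P + 1)" for P Q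
  proof -
    have "cos t * (\<Sum>k\<in>{int P<..int Q}. cmod (c k)) \<le> 3 / 2 * e"
      using that sector t P0 by (intro sector_window_bound) (auto simp: dist_norm less_imp_le)
    then show ?thesis
      using \<open>cos t > 0\<close> by (simp add: e_def)
  qed
  then show ?thesis
    using that by blast
qed

theorem lemma2:
  fixes c :: "int \<Rightarrow> complex" and \<theta>0 :: real and N0 :: nat and M :: real
    and f :: "real \<Rightarrow> complex"
  assumes "0 \<le> \<theta>0" and "\<theta>0 < pi / 2"
    and "\<forall>n::int. n \<ge> 1 \<longrightarrow> c n + c (-n) \<in> sector \<theta>0 \<and> c n - c (-n) \<in> sector \<theta>0"
    and "N0 \<ge> 1" and "M > 0"
    and "\<forall>m::int. m \<ge> 1 \<longrightarrow>
           (\<Sum>n\<in>{m..2*m}. cmod (c n - c (n + 1)))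
             \<le> M * Max ((\<lambda>n. cmod (c n)) ` {m..<m + int N0})"
    and "f = (\<lambda>x. lim (\<lambda>n. partial_sum c n x))"
    and "uniform_limit UNIV (partial_sum c) f sequentially"
  shows "(\<lambda>n::nat. of_nat n * c (int n)) \<longlonglongrightarrow> 0"
proof (rule LIMSEQ_I)
  fix r :: real assume "r > 0"
  define B where "B = r / (4 * real N0 * (M + 2))"
  have "B > 0"
    using \<open>r > 0\<close> assms(4,5) by (simp add: B_def)
  obtain P0 where window: "\<And>P Q. P0 \<le> P \<Longrightarrow> P < Q \<Longrightarrow> Q \<le> 3 * (P + 1) \<Longrightarrow>
      (\<Sum>k\<in>{int P<..int Q}. cmod (c k)) \<le> B"
    using uniform_limit_sector_window_bound[OF _ assms(1,2,8) \<open>B > 0\<close>] assms(3) by blast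
  have "real N0 * (M + 2) \<noteq> 0"
    using assms(4,5) by simp
  then have "2 * real N0 * (M + 2) * B = r / 2"
    by (simp add: B_def field_simps)
  moreover have "real n * cmod (c (int n)) \<le> 2 * real N0 * (M + 2) * B" if "2 * P0 + 2 \<le> n" for n
    using assms(4-6) window that by (intro of_nat_mult_norm_le_window_bound) auto
  ultimately have "norm (of_nat n * c (int n) - 0) < r" if "2 * P0 + 2 \<le> n" for n
    using that \<open>r > 0\<close> by (fastforce simp: norm_mult)
  then show "\<exists>n0. \<forall>n\<ge>n0. norm (of_nat n * c (int n) - 0) < r"
    by blast
qed

end
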